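(* Let $E$ be a real vector space, $M$ a linear subspace of $E$, $S$ a sublinear functional on $E$, $P(x)=-S(-x)$ for every $x\in E$, $T(x)=\inf_{y\in E}\{S(x+y)-P(y)\}$ for $x\in E$, and $f_0$ a linear functional on $M$. Then the conditions "$P(x)\le S(x)$ for every $x\in E$, and $P(x)\le f_0(x)\le S(x)$ for every $x\in M$" hold if and only if $f_0(x)\le T(x)$ for every $x\in M$.
   Context: A functional $S:E\to\mathbb{R}$ is sublinear if $S(x+y)\le S(x)+S(y)$ for all $x,y\in E$ and $S(\alpha x)=\alpha S(x)$ for all $x\in E$, $\alpha>0$. *)

theory Defs
  imports Complex_Main "HOL-Library.Extended_Real"
begin

definition sublinear :: "('a::real_vector \<Rightarrow> real) \<Rightarrow> bool" where
  "sublinear S \<longleftrightarrow> (\<forall>x y. S (x + y) \<le> S x + S y) \<and> (\<forall>x \<alpha>. \<alpha> > 0 \<longrightarrow> S (\<alpha> *\<^sub>R x) = \<alpha> * S x)"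

text \<open>A linear functional defined on the subspace M (values outside M are irrelevant).\<close>
definition linear_functional_on :: "'a::real_vector set \<Rightarrow> ('a \<Rightarrow> real) \<Rightarrow> bool" where
  "linear_functional_on M f \<longleftrightarrow>
     (\<forall>x\<in>M. \<forall>y\<in>M. f (x + y) = f x + f y) \<and> (\<forall>x\<in>M. \<forall>c. f (c *\<^sub>R x) = c * f x)"

definition Pfun :: "('a::real_vector \<Rightarrow> real) \<Rightarrow> 'a \<Rightarrow> real" where
  "Pfun S x = - S (- x)"

text \<open>T(x) = inf_y (S(x+y) - P(y)), taken in the extended reals (may be -infinity).\<close>
definition Tfun :: "('a::real_vector \<Rightarrow> real) \<Rightarrow> 'a \<Rightarrow> ereal" where
  "Tfun S x = (INF y. ereal (S (x + y) - Pfun S y))"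

end

theory Submission
  imports Defs
begin

text \<open>For sublinear S the infimum defining T is attained at y = 0, since subadditivity gives
  S x \<le> S (x + y) + S (- y); so T = S, and the condition f0 \<le> T on M is just f0 \<le> S on M.
  The lower bound P \<le> f0 on M then follows by applying f0 \<le> S to - x.\<close>

lemma sublinear_zero:
  assumes "sublinear S"
  shows "S 0 = 0"
proof -
  have "S ((2::real) *\<^sub>R 0) = 2 * S 0"
    using assms unfolding sublinear_def by (meson zero_less_numeral)
  then show ?thesis by simp
qed

lemma sublinear_le_diff_Pfun:
  assumes "sublinear S"
  shows "S x \<le> S (x + y) - Pfun S y"
proof -
  have "S ((x + y) + - y) \<le> S (x + y) + S (- y)"
    using assms unfolding sublinear_def by blast
  then show ?thesis by (simp add: Pfun_def)
qed

lemma Pfun_le_sublinear: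
  assumes "sublinear S"
  shows "Pfun S x \<le> S x"
  using sublinear_le_diff_Pfun[OF assms, of 0 x] sublinear_zero[OF assms] by simp

lemma Tfun_sublinear:
  assumes "sublinear S"
  shows "Tfun S x = ereal (S x)"
proof (rule antisym)
  have "Pfun S 0 = 0"
    using sublinear_zero[OF assms] by (simp add: Pfun_def)
  then show "Tfun S x \<le> ereal (S x)"
    unfolding Tfun_def by (intro INF_lower2[where i = 0]) simp_all
  show "ereal (S x) \<le> Tfun S x"
    unfolding Tfun_def using sublinear_le_diff_Pfun[OF assms] by (simp add: le_INF_iff)
qed

lemma Pfun_le_linear_functional_on:
  assumes "subspace M" and "linear_functional_on M f"
    and le_S: "\<forall>x\<in>M. f x \<le> S x" and "x \<in> M"
  shows "Pfun S x \<le> f x"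
proof -
  have "f (- x) \<le> S (- x)"
    using le_S \<open>subspace M\<close> \<open>x \<in> M\<close> by (simp add: subspace_neg)
  moreover have "f ((-1) *\<^sub>R x) = (-1) * f x"
    using assms(2) \<open>x \<in> M\<close> unfolding linear_functional_on_def by blast
  ultimately show ?thesis by (simp add: Pfun_def)
qed

theorem corollary4p1:
  fixes S :: "'a::real_vector \<Rightarrow> real" and M :: "'a set" and f0 :: "'a \<Rightarrow> real"
  assumes "subspace M" and "sublinear S" and "linear_functional_on M f0"
  shows "((\<forall>x. Pfun S x \<le> S x) \<and> (\<forall>x\<in>M. Pfun S x \<le> f0 x \<and> f0 x \<le> S x))
         \<longleftrightarrow> (\<forall>x\<in>M. ereal (f0 x) \<le> Tfun S x)"
proof -
  have "(\<forall>x\<in>M. ereal (f0 x) \<le> Tfun S x) \<longleftrightarrow> (\<forall>x\<in>M. f0 x \<le> S x)"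
    by (simp add: Tfun_sublinear[OF assms(2)])
  moreover have "\<forall>x. Pfun S x \<le> S x"
    using Pfun_le_sublinear[OF assms(2)] by blast
  moreover have "\<forall>x\<in>M. Pfun S x \<le> f0 x" if "\<forall>x\<in>M. f0 x \<le> S x"
    using Pfun_le_linear_functional_on[OF assms(1,3) that] by blast
  ultimately show ?thesis by auto
qed

end
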